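(* Let $H$ be a Hilbert space, let $A$ be a unitary operator on $H$ and let $B$ be a densely defined (possibly unbounded) normal operator in $H$. Then $BA$ is normal if and only if $AB$ is normal.
   Context: For (possibly unbounded) operators $S,T$, the product $ST$ has domain $D(ST)=\{x\in D(T): Tx\in D(S)\}$. A densely defined operator $T$ is normal if it is closed and $TT^*=T^*T$ (equality including domains). *)

theory Defs
  imports "HOL-Analysis.Analysis"
begin

class complex_vector = real_vector +
  fixes scaleC :: "complex \<Rightarrow> 'a \<Rightarrow> 'a"
  assumes scaleC_add_right: "scaleC a (x + y) = scaleC a x + scaleC a y"
    and scaleC_add_left: "scaleC (a + b) x = scaleC a x + scaleC b x"
    and scaleC_scaleC: "scaleC a (scaleC b x) = scaleC (a * b) x"
    and scaleC_one: "scaleC 1 x = x"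
    and scaleR_scaleC: "scaleR r x = scaleC (complex_of_real r) x"

class complex_inner = complex_vector + real_normed_vector +
  fixes cinner :: "'a \<Rightarrow> 'a \<Rightarrow> complex"
  assumes cinner_commute: "cinner x y = cnj (cinner y x)"
    and cinner_add_left: "cinner (x + y) z = cinner x z + cinner y z"
    and cinner_scaleC_left: "cinner (scaleC r x) y = cnj r * cinner x y"
    and cinner_nonneg: "Im (cinner x x) = 0 \<and> Re (cinner x x) \<ge> 0"
    and cinner_eq_zero_iff: "cinner x x = 0 \<longleftrightarrow> x = 0"
    and norm_eq_sqrt_cinner: "norm x = sqrt (Re (cinner x x))"

class chilbert_space = complex_inner + complete_space

text \<open>An operator T in H is identified with its graph, a subset of H x H.
  Its domain is Domain T; (x,y) in T means x in D(T) and Tx = y.\<close>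

definition is_operator :: "('a::complex_vector \<times> 'a) set \<Rightarrow> bool" where
  "is_operator T \<longleftrightarrow>
     (0, 0) \<in> T \<and>
     (\<forall>x y u v. (x, y) \<in> T \<longrightarrow> (u, v) \<in> T \<longrightarrow> (x + u, y + v) \<in> T) \<and>
     (\<forall>c x y. (x, y) \<in> T \<longrightarrow> (scaleC c x, scaleC c y) \<in> T) \<and>
     (\<forall>x y z. (x, y) \<in> T \<longrightarrow> (x, z) \<in> T \<longrightarrow> y = z)"

definition densely_defined :: "('a::complex_inner \<times> 'a) set \<Rightarrow> bool" where
  "densely_defined T \<longleftrightarrow> closure (Domain T) = UNIV"

definition closed_op :: "('a::complex_inner \<times> 'a) set \<Rightarrow> bool" where
  "closed_op T \<longleftrightarrow> closed T"

definition adjoint :: "('a::complex_inner \<times> 'a) set \<Rightarrow> ('a \<times> 'a) set" where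
  "adjoint T = {(y, z). \<forall>x w. (x, w) \<in> T \<longrightarrow> cinner w y = cinner x z}"

text \<open>Product ST with D(ST) = {x in D(T). Tx in D(S)}: relational composition of graphs.\<close>
definition op_mult :: "('a \<times> 'a) set \<Rightarrow> ('a \<times> 'a) set \<Rightarrow> ('a \<times> 'a) set" where
  "op_mult S T = T O S"

definition normal_op :: "('a::complex_inner \<times> 'a) set \<Rightarrow> bool" where
  "normal_op T \<longleftrightarrow> is_operator T \<and> densely_defined T \<and> closed_op T \<and>
     op_mult T (adjoint T) = op_mult (adjoint T) T"

definition unitary_op :: "('a::complex_inner \<times> 'a) set \<Rightarrow> bool" where
  "unitary_op A \<longleftrightarrow> is_operator A \<and> Domain A = UNIV \<and>
     (\<exists>K. \<forall>x y. (x, y) \<in> A \<longrightarrow> norm y \<le> K * norm x) \<and>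
     op_mult (adjoint A) A = Id \<and> op_mult A (adjoint A) = Id"

end

theory Submission
  imports Defs
begin

text \<open>Let \<open>u\<close> be the unitary map whose graph is \<open>A\<close>. Relationally, \<open>AB = A(BA)A\<^sup>-\<^sup>1\<close>, so the
  graph of \<open>AB\<close> is the image of the graph of \<open>BA\<close> under \<open>u \<times> u\<close>, and conversely with \<open>u\<^sup>-\<^sup>1\<close>.
  Transporting a graph along \<open>u \<times> u\<close> preserves linearity, density of the domain, closedness,
  and commutes with products and adjoints (the latter because \<open>u\<close> preserves the inner
  product and is onto), hence it preserves normality.\<close>

definition unitary_map :: "('a::complex_inner \<Rightarrow> 'a) \<Rightarrow> bool" where
  "unitary_map u \<longleftrightarrow> (\<forall>x y. u (x + y) = u x + u y) \<and> (\<forall>c x. u (scaleC c x) = scaleC c (u x))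
     \<and> (\<forall>x y. cinner (u x) (u y) = cinner x y) \<and> bij u"

lemma unitary_map_inv:
  assumes "unitary_map u"
  shows "unitary_map (inv u)"
proof -
  have b: "bij u" and "\<And>x y. u (x + y) = u x + u y" "\<And>c x. u (scaleC c x) = scaleC c (u x)"
    "\<And>x y. cinner (u x) (u y) = cinner x y"
    using assms unfolding unitary_map_def by auto
  moreover have "\<And>x. u (inv u x) = x" "\<And>x. inv u (u x) = x"
    using b by (simp_all add: bij_is_surj surj_f_inv_f bij_is_inj)
  ultimately show ?thesis
    unfolding unitary_map_def by (metis bij_imp_bij_inv)
qed

lemma bounded_linear_unitary_map:
  assumes "unitary_map u"
  shows "bounded_linear u"
proof (rule bounded_linear_intro[where K = 1])
  show "u (x + y) = u x + u y" for x y
    using assms unfolding unitary_map_def by blast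
  show "u (scaleR r x) = scaleR r (u x)" for r x
    using assms unfolding unitary_map_def by (simp add: scaleR_scaleC)
  show "norm (u x) \<le> norm x * 1" for x
    using assms unfolding unitary_map_def by (simp add: norm_eq_sqrt_cinner)
qed

lemma map_prod_image_iff:
  assumes "bij u"
  shows "(a, b) \<in> map_prod u u ` T \<longleftrightarrow> (inv u a, inv u b) \<in> T"
proof -
  have "\<And>x. u (inv u x) = x" "\<And>x. inv u (u x) = x"
    using assms by (simp_all add: bij_is_surj surj_f_inv_f bij_is_inj)
  then show ?thesis
    by (force intro: image_eqI[where x = "(inv u a, inv u b)"])
qed

lemma map_prod_inv_image_cancel:
  assumes "bij u"
  shows "map_prod (inv u) (inv u) ` map_prod u u ` T = T"
  using assms by (simp add: image_comp map_prod_compose[symmetric] bij_is_inj map_prod.id)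

lemma op_mult_map_prod_image:
  assumes "inj u"
  shows "op_mult (map_prod u u ` S) (map_prod u u ` T) = map_prod u u ` op_mult S T"
  using assms unfolding op_mult_def by (auto dest: injD)

lemma is_operator_map_prod_image:
  assumes add: "\<And>x y. u (x + y) = u x + u y"
    and scale: "\<And>c x. u (scaleC c x) = scaleC c (u x)"
    and "inj u" and T: "is_operator T"
  shows "is_operator (map_prod u u ` T)"
  unfolding is_operator_def
proof (intro conjI allI impI)
  have "(0, 0) \<in> T" and "u 0 = 0"
    using T add[of 0 0] unfolding is_operator_def by simp_all
  then show "(0, 0) \<in> map_prod u u ` T"
    using image_eqI[of "(0, 0)" "map_prod u u" "(0, 0)"] by simp
next
  fix a b a' b' assume "(a, b) \<in> map_prod u u ` T" "(a', b') \<in> map_prod u u ` T"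
  then obtain x y x' y' where "(x, y) \<in> T" "(x', y') \<in> T"
    and "a = u x" "b = u y" "a' = u x'" "b' = u y'"
    by auto
  moreover have "(x + x', y + y') \<in> T"
    using T calculation(1,2) unfolding is_operator_def by blast
  ultimately show "(a + a', b + b') \<in> map_prod u u ` T"
    using image_eqI[of "(a + a', b + b')" "map_prod u u" "(x + x', y + y')"] by (simp add: add)
next
  fix c a b assume "(a, b) \<in> map_prod u u ` T"
  then obtain x y where "(x, y) \<in> T" "a = u x" "b = u y"
    by auto
  moreover have "(scaleC c x, scaleC c y) \<in> T"
    using T calculation(1) unfolding is_operator_def by blast
  ultimately show "(scaleC c a, scaleC c b) \<in> map_prod u u ` T"
    using image_eqI[of "(scaleC c a, scaleC c b)" "map_prod u u" "(scaleC c x, scaleC c y)"]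
    by (simp add: scale)
next
  fix a b b' assume "(a, b) \<in> map_prod u u ` T" "(a, b') \<in> map_prod u u ` T"
  then obtain x y x' y' where "(x, y) \<in> T" "(x', y') \<in> T"
    and "a = u x" "b = u y" "a = u x'" "b' = u y'"
    by auto
  moreover have "x = x'"
    using \<open>inj u\<close> calculation(3,5) by (simp add: inj_eq)
  ultimately show "b = b'"
    using T unfolding is_operator_def by blast
qed

lemma densely_defined_map_prod_image:
  assumes u: "continuous_on UNIV u" and "surj u" and "densely_defined T"
  shows "densely_defined (map_prod u u ` T)"
proof -
  have "u ` Domain T \<subseteq> Domain (map_prod u u ` T)"
    by (force simp: Domain_iff)
  then have "closure (u ` Domain T) \<subseteq> closure (Domain (map_prod u u ` T))"
    by (rule closure_mono)
  moreover have "u ` closure (Domain T) \<subseteq> closure (u ` Domain T)"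
    using continuous_on_subset[OF u subset_UNIV]
    by (rule image_closure_subset[OF _ closed_closure closure_subset])
  ultimately show ?thesis
    using assms(2,3) unfolding densely_defined_def by auto
qed

lemma closed_op_map_prod_image:
  assumes "bij u" and "continuous_on UNIV (inv u)" and "closed_op T"
  shows "closed_op (map_prod u u ` T)"
proof -
  have "map_prod u u ` T = (\<lambda>p. (inv u (fst p), inv u (snd p))) -` T"
    using map_prod_image_iff[OF assms(1)] by (auto simp: bij_is_inj[OF assms(1)])
  moreover have "continuous_on UNIV (\<lambda>p. (inv u (fst p), inv u (snd p)))"
    by (intro continuous_on_Pair continuous_on_compose2[OF assms(2)] continuous_intros) auto
  ultimately show ?thesis
    using assms(3) closed_vimage unfolding closed_op_def by metis
qed

lemma adjoint_map_prod_image: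
  assumes "unitary_map u"
  shows "adjoint (map_prod u u ` T) = map_prod u u ` adjoint T"
proof -
  have b: "bij u" and inner: "\<And>x y. cinner (u x) (u y) = cinner x y"
    using assms unfolding unitary_map_def by auto
  have ui: "\<And>x. u (inv u x) = x"
    using b by (simp add: bij_is_surj surj_f_inv_f)
  have "(y, z) \<in> adjoint (map_prod u u ` T) \<longleftrightarrow> (y, z) \<in> map_prod u u ` adjoint T" for y z
  proof -
    have "(y, z) \<in> adjoint (map_prod u u ` T) \<longleftrightarrow>
        (\<forall>x w. (x, w) \<in> T \<longrightarrow> cinner (u w) y = cinner (u x) z)"
      unfolding adjoint_def by auto
    also have "\<dots> \<longleftrightarrow> (\<forall>x w. (x, w) \<in> T \<longrightarrow> cinner w (inv u y) = cinner x (inv u z))"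
      by (metis inner ui)
    finally show ?thesis
      unfolding map_prod_image_iff[OF b] adjoint_def by simp
  qed
  then show ?thesis
    by auto
qed

lemma normal_op_map_prod_image:
  assumes u: "unitary_map u" and T: "normal_op T"
  shows "normal_op (map_prod u u ` T)"
proof -
  have b: "bij u"
    using u unfolding unitary_map_def by blast
  have "is_operator (map_prod u u ` T)"
    using u T unfolding unitary_map_def normal_op_def
    by (intro is_operator_map_prod_image) (auto simp: bij_is_inj)
  moreover have "densely_defined (map_prod u u ` T)"
    using T b bounded_linear_unitary_map[OF u] unfolding normal_op_def
    by (intro densely_defined_map_prod_image) (auto simp: linear_continuous_on bij_is_surj)
  moreover have "closed_op (map_prod u u ` T)"
    using T b bounded_linear_unitary_map[OF unitary_map_inv[OF u]] unfolding normal_op_def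
    by (intro closed_op_map_prod_image) (auto simp: linear_continuous_on)
  moreover have "op_mult (map_prod u u ` T) (adjoint (map_prod u u ` T)) =
      op_mult (adjoint (map_prod u u ` T)) (map_prod u u ` T)"
    using T unfolding normal_op_def adjoint_map_prod_image[OF u]
    by (simp add: op_mult_map_prod_image bij_is_inj[OF b])
  ultimately show ?thesis
    unfolding normal_op_def by blast
qed

lemma unitary_op_graph:
  fixes A :: "('a::complex_inner \<times> 'a) set"
  assumes "unitary_op A"
  obtains u where "unitary_map u" and "\<And>x y. (x, y) \<in> A \<longleftrightarrow> y = u x"
proof -
  have opA: "is_operator A" and dA: "Domain A = UNIV"
    and left: "op_mult (adjoint A) A = Id" and right: "op_mult A (adjoint A) = Id"
    using assms unfolding unitary_op_def by auto
  define u where "u x = (THE y. (x, y) \<in> A)" for x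
  have graph: "(x, y) \<in> A \<longleftrightarrow> y = u x" for x y
  proof -
    obtain y0 where "(x, y0) \<in> A"
      using dA by blast
    moreover have "\<And>y z. (x, y) \<in> A \<Longrightarrow> (x, z) \<in> A \<Longrightarrow> y = z"
      using opA unfolding is_operator_def by blast
    ultimately show ?thesis
      unfolding u_def by (metis theI)
  qed
  have add: "u (x + y) = u x + u y" for x y
    using opA graph unfolding is_operator_def by metis
  have scale: "u (scaleC c x) = scaleC c (u x)" for c x
    using opA graph unfolding is_operator_def by metis
  have inner: "cinner (u x) (u y) = cinner x y" for x y
  proof -
    have "(y, y) \<in> A O adjoint A"
      using left unfolding op_mult_def by simp
    then show ?thesis
      using graph unfolding adjoint_def by auto
  qed
  have "surj u"
  proof -
    have "(y, y) \<in> adjoint A O A" for y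
      using right unfolding op_mult_def by simp
    then show ?thesis
      using graph by blast
  qed
  moreover have "inj u"
  proof (rule injI)
    fix x y assume "u x = u y"
    then have "u (x - y) = 0"
      using add[of "x - y" y] by simp
    then show "x = y"
      using inner[of "x - y" "x - y"] by (metis cinner_eq_zero_iff right_minus_eq)
  qed
  ultimately have "unitary_map u"
    unfolding unitary_map_def using add scale inner by (simp add: bij_def)
  then show ?thesis
    using that graph by blast
qed

lemma op_mult_graph_conj:
  assumes A: "\<And>x y. (x, y) \<in> A \<longleftrightarrow> y = u x" and b: "bij u"
  shows "op_mult A B = map_prod u u ` op_mult B A"
proof -
  have ui: "\<And>x. u (inv u x) = x" and iu: "\<And>x. inv u (u x) = x"
    using b by (simp_all add: bij_is_surj surj_f_inv_f bij_is_inj)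
  have "(a, c) \<in> op_mult A B \<longleftrightarrow> (a, c) \<in> map_prod u u ` op_mult B A" for a c
  proof -
    have "(a, c) \<in> op_mult A B \<longleftrightarrow> (\<exists>y. (a, y) \<in> B \<and> c = u y)"
      by (simp add: op_mult_def relcomp_unfold A)
    also have "\<dots> \<longleftrightarrow> (a, inv u c) \<in> B"
      using ui iu by metis
    also have "\<dots> \<longleftrightarrow> (inv u a, inv u c) \<in> op_mult B A"
      by (simp add: op_mult_def relcomp_unfold A ui)
    finally show ?thesis
      unfolding map_prod_image_iff[OF b] .
  qed
  then show ?thesis
    by auto
qed

theorem mainTheorem3:
  fixes A B :: "('a::chilbert_space \<times> 'a) set"
  assumes "unitary_op A"
    and "is_operator B" and "densely_defined B" and "normal_op B"
  shows "normal_op (op_mult B A) \<longleftrightarrow> normal_op (op_mult A B)"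
proof -
  obtain u where u: "unitary_map u" and A: "\<And>x y. (x, y) \<in> A \<longleftrightarrow> y = u x"
    using unitary_op_graph[OF assms(1)] by blast
  have b: "bij u"
    using u unfolding unitary_map_def by blast
  have AB: "op_mult A B = map_prod u u ` op_mult B A"
    by (rule op_mult_graph_conj[OF A b])
  then have BA: "op_mult B A = map_prod (inv u) (inv u) ` op_mult A B"
    by (simp add: map_prod_inv_image_cancel[OF b])
  show ?thesis
  proof
    assume "normal_op (op_mult B A)"
    then show "normal_op (op_mult A B)"
      unfolding AB by (rule normal_op_map_prod_image[OF u])
  next
    assume "normal_op (op_mult A B)"
    then show "normal_op (op_mult B A)"
      unfolding BA by (rule normal_op_map_prod_image[OF unitary_map_inv[OF u]])
  qed
qed

end
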